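(* Let $(X,* )$ be either an associative shelf or an idempotent semi-group, and suppose $X$ has a zero element $e$ (i.e. $x*e=e=e*x$ for all $x\in X$). Let $C_n=\mathbb{Z}X^{n+1}$ for $n\ge0$ with face maps $d_i:C_n\to C_{n-1}$, $0\le i\le n$, given by $$d_i(x_0,\dots,x_n)=\begin{cases}(x_0*x_1,x_2,\dots,x_{n-1},x_n*x_0) & i=0,\\ (x_n*x_0,x_1,\dots,x_{n-2},x_{n-1}*x_n) & i=n,\\ (x_0,\dots,x_{i-2},x_{i-1}*x_i,x_i*x_{i+1},x_{i+2},\dots,x_n) & 0<i<n,\end{cases}$$ and degeneracy maps $s_j:C_n\to C_{n+1}$, $0\le j\le n$, given by $s_j(x_0,\dots,x_n)=(x_0,\dots,x_{j-1},e,e,x_{j+1},\dots,x_n)$. Then $(C_n,d_i,s_j)$ is a very weak simplicial module, i.e.: (1) $d_i\circ d_j=d_{j-1}\circ d_i$ for $i<j$; (2) $s_i\circ s_j=s_{j+1}\circ s_i$ for $i\le j$; (3) $d_i\circ s_j=s_{j-1}\circ d_i$ for $i<j$, and $d_i\circ s_j=s_j\circ d_{i-1}$ for $i>j+1$ (whenever the compositions are defined).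
   Context: A shelf is a set with a binary operation $*$ satisfying $(a*b)*c=(a*c)*(b*c)$; an associative shelf is an associative shelf. An idempotent semi-group is an associative magma with $a*a=a$ for all $a$. *)

theory Defs
  imports Main "HOL-Library.Poly_Mapping"
begin

definition associative :: "('a \<Rightarrow> 'a \<Rightarrow> 'a) \<Rightarrow> bool" where
  "associative m \<longleftrightarrow> (\<forall>a b c. m (m a b) c = m a (m b c))"

definition shelf :: "('a \<Rightarrow> 'a \<Rightarrow> 'a) \<Rightarrow> bool" where
  "shelf m \<longleftrightarrow> (\<forall>a b c. m (m a b) c = m (m a c) (m b c))"

definition associative_shelf :: "('a \<Rightarrow> 'a \<Rightarrow> 'a) \<Rightarrow> bool" where
  "associative_shelf m \<longleftrightarrow> shelf m \<and> associative m"

definition idempotent_semigroup :: "('a \<Rightarrow> 'a \<Rightarrow> 'a) \<Rightarrow> bool" where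
  "idempotent_semigroup m \<longleftrightarrow> associative m \<and> (\<forall>a. m a a = a)"

definition zero_element :: "('a \<Rightarrow> 'a \<Rightarrow> 'a) \<Rightarrow> 'a \<Rightarrow> bool" where
  "zero_element m e \<longleftrightarrow> (\<forall>x. m x e = e \<and> m e x = e)"

text \<open>For n = 1 the two boundary formulas merge (cyclically) into a single entry:
  d_0(x_0,x_1) = x_0*x_1*x_0 and d_1(x_0,x_1) = x_1*x_0*x_1.
  On C_0 no face map is used; we return the empty list there.\<close>
definition face_gen :: "('a \<Rightarrow> 'a \<Rightarrow> 'a) \<Rightarrow> nat \<Rightarrow> 'a list \<Rightarrow> 'a list" where
  "face_gen m i xs =
    (let n = length xs - 1 in
     if length xs \<le> 1 then []
     else if n = 1 then
       (if i = 0 then [m (m (xs!0) (xs!1)) (xs!0)] else [m (m (xs!1) (xs!0)) (xs!1)])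
     else if i = 0 then [m (xs!0) (xs!1)] @ take (n-2) (drop 2 xs) @ [m (xs!n) (xs!0)]
     else if i = n then [m (xs!n) (xs!0)] @ take (n-2) (drop 1 xs) @ [m (xs!(n-1)) (xs!n)]
     else take (i-1) xs @ [m (xs!(i-1)) (xs!i), m (xs!i) (xs!(i+1))] @ drop (i+2) xs)"

definition degen_gen :: "'a \<Rightarrow> nat \<Rightarrow> 'a list \<Rightarrow> 'a list" where
  "degen_gen e j xs = take j xs @ [e, e] @ drop (j+1) xs"

text \<open>The chain module C_n = Z X^{n+1}: finitely supported integer combinations of
  (n+1)-tuples, i.e. the free abelian group on X^{n+1}.\<close>
definition chains :: "nat \<Rightarrow> ('a list \<Rightarrow>\<^sub>0 int) set" where
  "chains n = {c. Poly_Mapping.keys c \<subseteq> {xs. length xs = n + 1}}"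

definition face :: "('a \<Rightarrow> 'a \<Rightarrow> 'a) \<Rightarrow> nat \<Rightarrow> ('a list \<Rightarrow>\<^sub>0 int) \<Rightarrow> ('a list \<Rightarrow>\<^sub>0 int)" where
  "face m i = frag_extend (\<lambda>xs. frag_of (face_gen m i xs))"

definition degen :: "'a \<Rightarrow> nat \<Rightarrow> ('a list \<Rightarrow>\<^sub>0 int) \<Rightarrow> ('a list \<Rightarrow>\<^sub>0 int)" where
  "degen e j = frag_extend (\<lambda>xs. frag_of (degen_gen e j xs))"

end

theory Submission
  imports Defs
begin

text \<open>All four relations are checked coordinatewise on generators. The degeneracy relations only
  use that \<open>e\<close> is a zero. Composing two faces multiplies neighbouring entries, and wherever the
  cyclic wrap-around makes an entry \<open>b\<close> get used twice, associativity reduces the comparison to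
  \<open>a*(b*(b*c)) = a*(b*c)\<close>. This identity holds in an idempotent semigroup since \<open>b*b = b\<close>, and
  in an associative shelf it follows from right self-distributivity.\<close>

lemma idempotent_semigroup_absorb:
  assumes "idempotent_semigroup m"
  shows "m a (m b (m b c)) = m a (m b c)"
  using assms unfolding idempotent_semigroup_def associative_def by metis

lemma associative_shelf_absorb:
  assumes "associative_shelf m"
  shows "m a (m b (m b c)) = m a (m b c)"
  using assms unfolding associative_shelf_def shelf_def associative_def by metis

text \<open>Tuples are handled as functions \<open>nat \<Rightarrow> 'a\<close>, so that the face and degeneracy maps become
  explicit formulas for the \<open>k\<close>-th entry of the result: \<open>face_at m n i x k\<close> is the \<open>k\<close>-th entry
  of \<open>d\<^sub>i (x 0, \<dots>, x n)\<close>.\<close>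

definition face_at :: "('a \<Rightarrow> 'a \<Rightarrow> 'a) \<Rightarrow> nat \<Rightarrow> nat \<Rightarrow> (nat \<Rightarrow> 'a) \<Rightarrow> nat \<Rightarrow> 'a" where
  "face_at m n i x k =
    (if i = 0 then
       (if k = 0 then m (x 0) (x 1) else if k = n - 1 then m (x n) (x 0) else x (k + 1))
     else if i = n then
       (if k = 0 then m (x n) (x 0) else if k = n - 1 then m (x (n - 1)) (x n) else x k)
     else if k < i - 1 then x k
     else if k = i - 1 then m (x (i - 1)) (x i)
     else if k = i then m (x i) (x (i + 1))
     else x (k + 1))"

definition degen_at :: "'a \<Rightarrow> nat \<Rightarrow> (nat \<Rightarrow> 'a) \<Rightarrow> nat \<Rightarrow> 'a" where
  "degen_at e j x k = (if k < j then x k else if k \<le> j + 1 then e else x (k - 1))"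

lemma face_at_cong:
  assumes "\<And>t. t \<le> n \<Longrightarrow> x t = y t" "k < n"
  shows "face_at m n i x k = face_at m n i y k"
  using assms unfolding face_at_def by auto

lemma degen_at_cong:
  assumes "\<And>t. t \<le> n \<Longrightarrow> x t = y t" "j \<le> Suc n" "k < Suc (Suc n)"
  shows "degen_at e j x k = degen_at e j y k"
  using assms unfolding degen_at_def by auto

lemma face_at_face_at:
  assumes "associative m" and absorb: "\<And>a b c. m a (m b (m b c)) = m a (m b c)"
    and "2 \<le> n" "i < j" "j \<le> Suc n" "k < n"
  shows "face_at m n i (face_at m (Suc n) j x) k = face_at m n (j - 1) (face_at m (Suc n) i x) k"
proof -
  have assoc: "m (m a b) c = m a (m b c)" for a b c
    using \<open>associative m\<close> unfolding associative_def by blast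
  obtain p where n: "n = Suc (Suc p)"
    using \<open>2 \<le> n\<close> by (metis add_2_eq_Suc le_Suc_ex)
  consider "i = 0" "j = 1" | r where "i = 0" "j = Suc (Suc r)" "Suc r < n" | "i = 0" "j = Suc n"
    | q r where "i = Suc q" "j = Suc (Suc r)" "q \<le> r" "Suc r < n"
    | q where "i = Suc q" "Suc q < n" "j = Suc n" | "i = n" "j = Suc n"
    using \<open>i < j\<close> \<open>j \<le> Suc n\<close>
    by (cases i; cases j; cases "j - 1"; cases "j = Suc n"; cases "i = n") auto
  then show ?thesis
    by cases (use \<open>k < n\<close> in \<open>simp_all add: n face_at_def assoc absorb\<close>)
qed

lemma degen_at_degen_at:
  "i \<le> j \<Longrightarrow> degen_at e i (degen_at e j x) k = degen_at e (Suc j) (degen_at e i x) k"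
  unfolding degen_at_def by auto

lemma face_at_zero:
  "face_at m n 0 x k = (if k = 0 then m (x 0) (x 1) else if k = n - 1 then m (x n) (x 0) else x (k + 1))"
  by (simp add: face_at_def)

lemma face_at_last:
  "0 < n \<Longrightarrow> face_at m n n x k =
    (if k = 0 then m (x n) (x 0) else if k = n - 1 then m (x (n - 1)) (x n) else x k)"
  by (simp add: face_at_def)

lemma face_at_inner:
  "0 < i \<Longrightarrow> i < n \<Longrightarrow> face_at m n i x k =
    (if k < i - 1 then x k else if k = i - 1 then m (x (i - 1)) (x i)
     else if k = i then m (x i) (x (i + 1)) else x (k + 1))"
  by (simp add: face_at_def)

lemma face_at_degen_at_less:
  assumes "zero_element m e" "2 \<le> n" "i < j" "j \<le> n" "k < Suc n"
  shows "face_at m (Suc n) i (degen_at e j x) k = degen_at e (j - 1) (face_at m n i x) k"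
proof -
  have "m a e = e" "m e a = e" for a
    using \<open>zero_element m e\<close> unfolding zero_element_def by auto
  then show ?thesis
    using assms(2-) by (cases "i = 0") (auto simp: face_at_zero face_at_inner degen_at_def)
qed

lemma face_at_degen_at_greater:
  assumes "zero_element m e" "2 \<le> n" "Suc j < i" "i \<le> Suc n" "k < Suc n"
  shows "face_at m (Suc n) i (degen_at e j x) k = degen_at e j (face_at m n (i - 1) x) k"
proof -
  have "m a e = e" "m e a = e" for a
    using \<open>zero_element m e\<close> unfolding zero_element_def by auto
  then show ?thesis
    using assms(2-) by (cases "i = Suc n") (auto simp: face_at_last face_at_inner degen_at_def)
qed

lemma length_face_gen:
  "3 \<le> length xs \<Longrightarrow> i < length xs \<Longrightarrow> length (face_gen m i xs) = length xs - 1"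
  by (auto simp: face_gen_def Let_def)

lemma length_degen_gen: "j < length xs \<Longrightarrow> length (degen_gen e j xs) = Suc (length xs)"
  by (simp add: degen_gen_def)

lemma nth_face_gen:
  assumes "length xs = Suc n" "2 \<le> n" "i \<le> n" "k < n"
  shows "face_gen m i xs ! k = face_at m n i (nth xs) k"
proof -
  consider "i = 0" | "i = n" | "0 < i" "i < n"
    using assms by linarith
  then show ?thesis
  proof cases
    case 1
    then have "face_gen m i xs = [m (xs!0) (xs!1)] @ take (n - 2) (drop 2 xs) @ [m (xs!n) (xs!0)]"
      using assms by (simp add: face_gen_def Let_def)
    then show ?thesis using 1 assms by (cases k) (auto simp: face_at_def nth_append)
  next
    case 2
    then have "face_gen m i xs =
        [m (xs!n) (xs!0)] @ take (n - 2) (drop 1 xs) @ [m (xs!(n - 1)) (xs!n)]"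
      using assms by (simp add: face_gen_def Let_def)
    then show ?thesis using 2 assms by (cases k) (auto simp: face_at_def nth_append)
  next
    case 3
    then have "face_gen m i xs =
        take (i - 1) xs @ [m (xs!(i - 1)) (xs!i), m (xs!i) (xs!(i + 1))] @ drop (i + 2) xs"
      using assms by (simp add: face_gen_def Let_def)
    then show ?thesis using 3 assms by (simp add: face_at_def nth_append)
  qed
qed

lemma nth_degen_gen:
  assumes "j < length xs" "k < Suc (length xs)"
  shows "degen_gen e j xs ! k = degen_at e j (nth xs) k"
  using assms
  by (auto simp: degen_gen_def degen_at_def nth_append min_def nth_Cons' Suc_diff_Suc numeral_2_eq_2)

lemma face_gen_map_upt:
  assumes "2 \<le> n" "i \<le> n"
  shows "face_gen m i (map x [0..<Suc n]) = map (face_at m n i x) [0..<n]"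
proof (rule nth_equalityI)
  show "length (face_gen m i (map x [0..<Suc n])) = length (map (face_at m n i x) [0..<n])"
    using assms by (simp add: length_face_gen del: upt_Suc)
  fix k assume "k < length (face_gen m i (map x [0..<Suc n]))"
  then have "k < n"
    using assms by (simp add: length_face_gen del: upt_Suc)
  then have "face_gen m i (map x [0..<Suc n]) ! k = face_at m n i ((!) (map x [0..<Suc n])) k"
    using assms by (intro nth_face_gen) auto
  also have "\<dots> = face_at m n i x k"
    using \<open>k < n\<close> by (intro face_at_cong) (auto simp del: upt_Suc)
  finally show "face_gen m i (map x [0..<Suc n]) ! k = map (face_at m n i x) [0..<n] ! k"
    using \<open>k < n\<close> by (simp del: upt_Suc)
qed

lemma degen_gen_map_upt:
  assumes "j \<le> n"
  shows "degen_gen e j (map x [0..<Suc n]) = map (degen_at e j x) [0..<Suc (Suc n)]"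
proof (rule nth_equalityI)
  show "length (degen_gen e j (map x [0..<Suc n])) = length (map (degen_at e j x) [0..<Suc (Suc n)])"
    using assms by (simp add: length_degen_gen del: upt_Suc)
  fix k assume "k < length (degen_gen e j (map x [0..<Suc n]))"
  then have "k < Suc (Suc n)"
    using assms by (simp add: length_degen_gen del: upt_Suc)
  then have "degen_gen e j (map x [0..<Suc n]) ! k = degen_at e j ((!) (map x [0..<Suc n])) k"
    using assms by (intro nth_degen_gen) auto
  also have "\<dots> = degen_at e j x k"
    using assms \<open>k < Suc (Suc n)\<close> by (intro degen_at_cong) (auto simp del: upt_Suc)
  finally show "degen_gen e j (map x [0..<Suc n]) ! k = map (degen_at e j x) [0..<Suc (Suc n)] ! k"
    using \<open>k < Suc (Suc n)\<close> by (simp del: upt_Suc)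
qed


lemma face_gen_face_gen:
  assumes "associative m" and absorb: "\<And>a b c. m a (m b (m b c)) = m a (m b c)"
    and "length xs = Suc n" "2 \<le> n" "i < j" "j \<le> n"
  shows "face_gen m i (face_gen m j xs) = face_gen m (j - 1) (face_gen m i xs)"
proof (cases "n = 2")
  case True
  \<comment> \<open>the outer face then acts on a pair, where the merged cyclic formula applies\<close>
  have assoc: "m (m a b) c = m a (m b c)" for a b c
    using \<open>associative m\<close> unfolding associative_def by blast
  obtain a b c where xs: "xs = [a, b, c]"
    using \<open>length xs = Suc n\<close> True by (auto simp: length_Suc_conv numeral_2_eq_2)
  have "i = 0 \<and> j = 1 \<or> i = 0 \<and> j = 2 \<or> i = 1 \<and> j = 2"
    using assms(5,6) True by arith
  then show ?thesis
    by (elim disjE conjE; simp add: xs face_gen_def; simp add: assoc absorb)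
next
  case False
  then obtain n' where n: "n = Suc n'" "2 \<le> n'"
    using \<open>2 \<le> n\<close> by (cases n) auto
  define x where "x = nth xs"
  have xs: "xs = map x [0..<Suc (Suc n')]"
    using \<open>length xs = Suc n\<close> n unfolding x_def by (metis map_nth)
  have "face_gen m i (face_gen m j xs) = map (face_at m n' i (face_at m (Suc n') j x)) [0..<n']"
    using assms(5,6) n by (simp add: xs face_gen_map_upt del: upt_Suc)
  also have "\<dots> = map (face_at m n' (j - 1) (face_at m (Suc n') i x)) [0..<n']"
    using assms n by (intro map_cong refl face_at_face_at) auto
  also have "\<dots> = face_gen m (j - 1) (face_gen m i xs)"
    using assms(5,6) n by (simp add: xs face_gen_map_upt del: upt_Suc)
  finally show ?thesis .
qed

lemma degen_gen_degen_gen: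
  assumes "length xs = Suc n" "i \<le> j" "j \<le> n"
  shows "degen_gen e i (degen_gen e j xs) = degen_gen e (j + 1) (degen_gen e i xs)"
proof -
  define x where "x = nth xs"
  have xs: "xs = map x [0..<Suc n]"
    using \<open>length xs = Suc n\<close> unfolding x_def by (metis map_nth)
  have "degen_gen e i (degen_gen e j xs) = map (degen_at e i (degen_at e j x)) [0..<Suc (Suc (Suc n))]"
    using assms by (simp add: xs degen_gen_map_upt del: upt_Suc)
  also have "\<dots> = map (degen_at e (Suc j) (degen_at e i x)) [0..<Suc (Suc (Suc n))]"
    using assms by (simp add: degen_at_degen_at)
  also have "\<dots> = degen_gen e (j + 1) (degen_gen e i xs)"
    using assms by (simp add: xs degen_gen_map_upt del: upt_Suc)
  finally show ?thesis .
qed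

lemma face_gen_degen_gen_less:
  assumes "zero_element m e" "length xs = Suc n" "i < j" "j \<le> n"
  shows "face_gen m i (degen_gen e j xs) = degen_gen e (j - 1) (face_gen m i xs)"
proof (cases "n = 1")
  case True
  obtain a b where "xs = [a, b]"
    using \<open>length xs = Suc n\<close> True by (auto simp: length_Suc_conv)
  moreover have "i = 0" "j = 1"
    using assms(3,4) True by auto
  ultimately show ?thesis
    using \<open>zero_element m e\<close> by (simp add: zero_element_def face_gen_def degen_gen_def)
next
  case False
  then obtain n' where n: "n = Suc n'" "1 \<le> n'"
    using assms(3,4) by (cases n) auto
  define x where "x = nth xs"
  have xs: "xs = map x [0..<Suc n]"
    using \<open>length xs = Suc n\<close> unfolding x_def by (metis map_nth)
  have "face_gen m i (degen_gen e j xs) = map (face_at m (Suc n) i (degen_at e j x)) [0..<Suc n]"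
    using assms n by (simp add: xs degen_gen_map_upt face_gen_map_upt del: upt_Suc)
  also have "\<dots> = map (degen_at e (j - 1) (face_at m n i x)) [0..<Suc n]"
    using assms n by (intro map_cong refl face_at_degen_at_less) auto
  also have "\<dots> = degen_gen e (j - 1) (face_gen m i xs)"
    using assms n by (simp add: xs degen_gen_map_upt face_gen_map_upt del: upt_Suc)
  finally show ?thesis .
qed

lemma face_gen_degen_gen_greater:
  assumes "zero_element m e" "length xs = Suc n" "Suc j < i" "i \<le> Suc n"
  shows "face_gen m i (degen_gen e j xs) = degen_gen e j (face_gen m (i - 1) xs)"
proof (cases "n = 1")
  case True
  obtain a b where "xs = [a, b]"
    using \<open>length xs = Suc n\<close> True by (auto simp: length_Suc_conv)
  moreover have "i = 2" "j = 0"
    using assms(3,4) True by auto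
  ultimately show ?thesis
    using \<open>zero_element m e\<close> by (simp add: zero_element_def face_gen_def degen_gen_def)
next
  case False
  then obtain n' where n: "n = Suc n'" "1 \<le> n'"
    using assms(3,4) by (cases n) auto
  define x where "x = nth xs"
  have xs: "xs = map x [0..<Suc n]"
    using \<open>length xs = Suc n\<close> unfolding x_def by (metis map_nth)
  have "face_gen m i (degen_gen e j xs) = map (face_at m (Suc n) i (degen_at e j x)) [0..<Suc n]"
    using assms n by (simp add: xs degen_gen_map_upt face_gen_map_upt del: upt_Suc)
  also have "\<dots> = map (degen_at e j (face_at m n (i - 1) x)) [0..<Suc n]"
    using assms n by (intro map_cong refl face_at_degen_at_greater) auto
  also have "\<dots> = degen_gen e j (face_gen m (i - 1) xs)"
    using assms n by (simp add: xs degen_gen_map_upt face_gen_map_upt del: upt_Suc)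
  finally show ?thesis .
qed

lemma frag_extend_frag_of_compose:
  "frag_extend (\<lambda>x. frag_of (f x)) (frag_extend (\<lambda>x. frag_of (g x)) c) =
   frag_extend (\<lambda>x. frag_of (f (g x))) c"
  using frag_extend_compose[of "\<lambda>x. frag_of (f x)" g c] by (simp add: comp_def)

lemma frag_extend_chains_cong:
  assumes "c \<in> chains n" "\<And>xs. length xs = Suc n \<Longrightarrow> f xs = g xs"
  shows "frag_extend (\<lambda>xs. frag_of (f xs)) c = frag_extend (\<lambda>xs. frag_of (g xs)) c"
  using assms unfolding chains_def by (intro frag_extend_eq) auto

lemma face_face:
  assumes "associative m" "\<And>a b c. m a (m b (m b c)) = m a (m b c)"
    and "c \<in> chains n" "2 \<le> n" "i < j" "j \<le> n"
  shows "face m i (face m j c) = face m (j - 1) (face m i c)"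
  unfolding face_def frag_extend_frag_of_compose
  using assms(3-) by (intro frag_extend_chains_cong face_gen_face_gen[OF assms(1,2)])

lemma degen_degen:
  assumes "c \<in> chains n" "i \<le> j" "j \<le> n"
  shows "degen e i (degen e j c) = degen e (j + 1) (degen e i c)"
  unfolding degen_def frag_extend_frag_of_compose
  using assms by (intro frag_extend_chains_cong degen_gen_degen_gen)

lemma face_degen_less:
  assumes "zero_element m e" "c \<in> chains n" "i < j" "j \<le> n"
  shows "face m i (degen e j c) = degen e (j - 1) (face m i c)"
  unfolding face_def degen_def frag_extend_frag_of_compose
  using assms(2-) by (intro frag_extend_chains_cong face_gen_degen_gen_less[OF assms(1)])

lemma face_degen_greater:
  assumes "zero_element m e" "c \<in> chains n" "j + 1 < i" "i \<le> n + 1"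
  shows "face m i (degen e j c) = degen e j (face m (i - 1) c)"
  unfolding face_def degen_def frag_extend_frag_of_compose
  using assms(2-) by (intro frag_extend_chains_cong face_gen_degen_gen_greater[OF assms(1)]) auto

theorem proposition1p5:
  fixes m :: "'a \<Rightarrow> 'a \<Rightarrow> 'a" and e :: 'a
  assumes struct: "associative_shelf m \<or> idempotent_semigroup m"
    and zero: "zero_element m e"
  shows "(\<forall>n i j c. c \<in> chains n \<and> 2 \<le> n \<and> i < j \<and> j \<le> n \<longrightarrow>
            face m i (face m j c) = face m (j - 1) (face m i c))
       \<and> (\<forall>n i j c. c \<in> chains n \<and> i \<le> j \<and> j \<le> n \<longrightarrow>
            degen e i (degen e j c) = degen e (j + 1) (degen e i c))
       \<and> (\<forall>n i j c. c \<in> chains n \<and> i < j \<and> j \<le> n \<longrightarrow>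
            face m i (degen e j c) = degen e (j - 1) (face m i c))
       \<and> (\<forall>n i j c. c \<in> chains n \<and> j + 1 < i \<and> i \<le> n + 1 \<longrightarrow>
            face m i (degen e j c) = degen e j (face m (i - 1) c))"
proof -
  have assoc: "associative m"
    using struct unfolding associative_shelf_def idempotent_semigroup_def by blast
  have absorb: "m a (m b (m b c)) = m a (m b c)" for a b c
    using struct by (elim disjE) (simp_all add: associative_shelf_absorb idempotent_semigroup_absorb)
  show ?thesis
    by (intro conjI allI impI; elim conjE)
      (simp_all add: face_face[OF assoc absorb] degen_degen face_degen_less[OF zero]
        face_degen_greater[OF zero])
qed

end
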